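(* Assume $f_0,f_1\in \mathrm{PL}_0(\mathbf{I})$ generate a standard isomorphic copy of $F$. Let $(a,c)$ be an orbital of $f_0$ and let $(b_1,d_1),\dots,(b_n,d_n)$ be the orbitals of $f_1$ contained in $(a,c)$, in increasing order. If $(a,c)$ is an up-bump of $f_0$ and $r$ is the minimal number in $(a,c)$ with $rf_0=rf_1$, then $b_1f_0\ge r$. If $(a,c)$ is a down-bump of $f_0$ and $r$ is the maximal number in $(a,c)$ with $rf_0=rf_1$, then $d_nf_0\le r$.
   Context: $\mathrm{PL}_0(\mathbf{I})$ is the group of orientation-preserving piecewise-linear homeomorphisms of $[0,1]$ with finitely many points of non-differentiability; functions act on the right ($tf=f(t)$). The orbitals of $f$ are the connected components (open intervals) of $\operatorname{Supp}(f)=\{x: xf\ne x\}$; an orbital $A$ is an up-bump (resp. down-bump) if $xf>x$ (resp. $xf<x$) for all $x\in A$. Thompson's group $F=\langle x_0,x_1\mid [x_0x_1^{-1},x_1^{x_0}]=[x_0x_1^{-1},x_1^{x_0^2}]=1\rangle$, with $a^b=b^{-1}ab$, $[a,b]=aba^{-1}b^{-1}$; $f_0,f_1$ generate a standard isomorphic copy of $F$ if $\langle f_0,f_1\rangle\cong F$ via an isomorphism with $x_0\mapsto f_0$, $x_1\mapsto f_1$. *)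

theory Defs
  imports "HOL-Analysis.Analysis"
begin

text \<open>Elements of PL_0(I) are represented as functions real => real that are the
identity outside [0,1]; the right action t f is the function value f t.\<close>

definition PL0 :: "(real \<Rightarrow> real) \<Rightarrow> bool" where
  "PL0 f \<longleftrightarrow>
     (\<forall>x. x \<notin> {0..1} \<longrightarrow> f x = x) \<and>
     f ` {0..1} = {0..1} \<and>
     continuous_on {0..1} f \<and>
     strict_mono_on {0..1} f \<and>
     (\<exists>ts::real list. sorted_wrt (<) ts \<and> ts \<noteq> [] \<and> hd ts = 0 \<and> last ts = 1 \<and>
        (\<forall>i. Suc i < length ts \<longrightarrow>
           (\<exists>m k. \<forall>x\<in>{ts!i..ts!Suc i}. f x = m * x + k)))"

definition supp :: "(real \<Rightarrow> real) \<Rightarrow> real set" where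
  "supp f = {x. f x \<noteq> x}"

definition orbital :: "(real \<Rightarrow> real) \<Rightarrow> real \<Rightarrow> real \<Rightarrow> bool" where
  "orbital f a c \<longleftrightarrow> a < c \<and> {a<..<c} \<in> components (supp f)"

definition up_bump :: "(real \<Rightarrow> real) \<Rightarrow> real \<Rightarrow> real \<Rightarrow> bool" where
  "up_bump f a c \<longleftrightarrow> orbital f a c \<and> (\<forall>x\<in>{a<..<c}. f x > x)"

definition down_bump :: "(real \<Rightarrow> real) \<Rightarrow> real \<Rightarrow> real \<Rightarrow> bool" where
  "down_bump f a c \<longleftrightarrow> orbital f a c \<and> (\<forall>x\<in>{a<..<c}. f x < x)"

text \<open>Words in the generators x0, x1 and their inverses: a letter is
  (generator, is_inverse), generator False = x0, True = x1.\<close>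
type_synonym letter = "bool \<times> bool"

definition winv :: "letter list \<Rightarrow> letter list" where
  "winv w = rev (map (\<lambda>(g, e). (g, \<not> e)) w)"

definition X0 :: "letter list" where "X0 = [(False, False)]"
definition X1 :: "letter list" where "X1 = [(True, False)]"

definition wconj :: "letter list \<Rightarrow> letter list \<Rightarrow> letter list" where
  "wconj a b = winv b @ a @ b"
definition wcomm :: "letter list \<Rightarrow> letter list \<Rightarrow> letter list" where
  "wcomm a b = a @ b @ winv a @ winv b"

definition rel1 :: "letter list" where
  "rel1 = wcomm (X0 @ winv X1) (wconj X1 X0)"
definition rel2 :: "letter list" where
  "rel2 = wcomm (X0 @ winv X1) (wconj X1 (X0 @ X0))"

text \<open>Equality of words in Thompson's group F, i.e. the congruence on words generated
  by free cancellation and the two defining relators.\<close>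
inductive F_eq :: "letter list \<Rightarrow> letter list \<Rightarrow> bool" where
  F_refl: "F_eq u u"
| F_sym: "F_eq u v \<Longrightarrow> F_eq v u"
| F_trans: "F_eq u v \<Longrightarrow> F_eq v w \<Longrightarrow> F_eq u w"
| F_cong: "F_eq u u' \<Longrightarrow> F_eq v v' \<Longrightarrow> F_eq (u @ v) (u' @ v')"
| F_cancel: "F_eq [(g, e), (g, \<not> e)] []"
| F_rel1: "F_eq rel1 []"
| F_rel2: "F_eq rel2 []"

text \<open>Evaluation of a word with x0 |-> f0, x1 |-> f1, using right actions:
  t(fg) = (tf)g, i.e. the product fg is the function g o f.\<close>
definition letter_val :: "(real \<Rightarrow> real) \<Rightarrow> (real \<Rightarrow> real) \<Rightarrow> letter \<Rightarrow> (real \<Rightarrow> real)" where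
  "letter_val f0 f1 l = (let h = (if fst l then f1 else f0) in if snd l then inv h else h)"

fun word_val :: "(real \<Rightarrow> real) \<Rightarrow> (real \<Rightarrow> real) \<Rightarrow> letter list \<Rightarrow> (real \<Rightarrow> real)" where
  "word_val f0 f1 [] = id"
| "word_val f0 f1 (l # w) = word_val f0 f1 w \<circ> letter_val f0 f1 l"

text \<open>f0, f1 generate a standard isomorphic copy of F: x0 |-> f0, x1 |-> f1 induces
  a well-defined injective homomorphism from F (onto the group generated by f0, f1).\<close>
definition standard_F_copy :: "(real \<Rightarrow> real) \<Rightarrow> (real \<Rightarrow> real) \<Rightarrow> bool" where
  "standard_F_copy f0 f1 \<longleftrightarrow>
     (\<forall>u v. F_eq u v \<longleftrightarrow> word_val f0 f1 u = word_val f0 f1 v)"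

end

theory Submission
  imports Defs
begin

(* Let g = x0 x1^-1, k1 = x1^x0 and k2 = x1^(x0^2); the relators of F say that g commutes
   with k1 and k2.  In the up-bump case the fixed points of g in (a,c) are the points where
   f0 and f1 agree, so g fixes no point of (a,r), and on [b1,r) it pushes points up towards r.
   If f0 b1 < r, the g-orbit of f0 b1 stays below r and consists of fixed points of k1, since
   k1 fixes f0 b1; pulling back by f0 gives infinitely many fixed points of f1, alternating with
   points moved by f1, which a piecewise linear map cannot have.  If b1 = a, commutation of g
   with k1 first gives r <= f0 d1, so k2 moves r, and commutation of g with k2 then yields a
   fixed point of g in (a,r).  The bound thus holds for every orbital of f1 inside (a,c).
   The down-bump case is the up-bump case for the conjugates x |-> -f(-x). *)

lemma PL0_fixes_endpoints:
  assumes "PL0 f"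
  shows "f 0 = 0" "f 1 = 1"
proof -
  have im: "f ` {0..1} = {0..1}" and mono: "mono_on {0..1} f"
    using assms strict_mono_on_imp_mono_on unfolding PL0_def by auto
  have "0 \<in> f ` {0..1}" "1 \<in> f ` {0..1}" using im by auto
  then obtain s t where "s \<in> {0..1}" "f s = 0" "t \<in> {0..1}" "f t = 1" by (metis imageE)
  moreover have "f 0 \<in> {0..1}" "f 1 \<in> {0..1}" using im by auto
  ultimately show "f 0 = 0" "f 1 = 1"
    using mono_onD[OF mono, of 0 s] mono_onD[OF mono, of t 1] by auto
qed

lemma PL0_maps_unit_interval:
  assumes "PL0 f" "x \<in> {0..1}"
  shows "f x \<in> {0..1}"
  using assms unfolding PL0_def by blast

lemma PL0_identity_outside:
  assumes "PL0 f" "x \<notin> {0..1}"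
  shows "f x = x"
  using assms unfolding PL0_def by blast

lemma PL0_strict_mono:
  assumes "PL0 f"
  shows "strict_mono f"
proof (rule strict_monoI)
  fix x y :: real
  assume "x < y"
  have sm: "strict_mono_on {0..1} f" using assms unfolding PL0_def by blast
  note out = PL0_identity_outside[OF assms] and unit = PL0_maps_unit_interval[OF assms]
  show "f x < f y"
  proof (cases "y \<in> {0..1}")
    case y: True
    show ?thesis
    proof (cases "x \<in> {0..1}")
      case True
      then show ?thesis using y \<open>x < y\<close> strict_mono_onD[OF sm] by blast
    next
      case False
      then have "x < 0" using y \<open>x < y\<close> by auto
      then show ?thesis using out[OF False] unit[OF y] by simp
    qed
  next
    case y: False
    show ?thesis
    proof (cases "x \<in> {0..1}")
      case True
      then have "1 < y" using y \<open>x < y\<close> by auto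
      then show ?thesis using out[OF y] unit[OF True] by simp
    next
      case False
      then show ?thesis using out[OF y] out[OF False] \<open>x < y\<close> by simp
    qed
  qed
qed

lemma PL0_surj:
  assumes "PL0 f"
  shows "surj f"
proof -
  have "y \<in> range f" for y
  proof (cases "y \<in> {0..1}")
    case True
    then have "y \<in> f ` {0..1}" using assms unfolding PL0_def by blast
    then show ?thesis by blast
  next
    case False
    then have "f y = y" by (rule PL0_identity_outside[OF assms])
    then show ?thesis by (metis rangeI)
  qed
  then show ?thesis by blast
qed

lemma PL0_continuous:
  assumes "PL0 f"
  shows "continuous_on UNIV f"
proof -
  have id_outside: "f x = x" if "x \<notin> {0<..<1}" for x
    using PL0_identity_outside[OF assms] PL0_fixes_endpoints[OF assms] that
    by (cases "x = 0 \<or> x = 1") auto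
  have "continuous_on {..0} f" "continuous_on {1..} f"
    by (auto intro!: continuous_on_eq[OF continuous_on_id] simp: id_outside)
  moreover have "continuous_on {0..1} f" using assms unfolding PL0_def by blast
  ultimately have "continuous_on ({..0} \<union> {0..1} \<union> {1..}) f"
    by (intro continuous_on_closed_Un) auto
  moreover have "{..0} \<union> {0..1} \<union> {1..} = (UNIV :: real set)" by auto
  ultimately show ?thesis by simp
qed

lemma PL0_supp:
  assumes "PL0 f"
  shows "supp f \<subseteq> {0<..<1}"
  using PL0_identity_outside[OF assms] PL0_fixes_endpoints[OF assms] unfolding supp_def
  by (force simp: atLeastAtMost_iff greaterThanLessThan_iff)

(* The piecewise linearity of PL0, detached from the unit interval so that it survives
   conjugation by x |-> -x. *)
definition piecewise_affine_on :: "real set \<Rightarrow> (real \<Rightarrow> real) \<Rightarrow> bool" where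
  "piecewise_affine_on S f \<longleftrightarrow>
     (\<exists>P. finite P \<and> S \<subseteq> \<Union>P \<and> (\<forall>I\<in>P. convex I \<and> (\<exists>m k. \<forall>x\<in>I. f x = m * x + k)))"

lemma piecewise_affine_on_subset:
  "piecewise_affine_on S f \<Longrightarrow> T \<subseteq> S \<Longrightarrow> piecewise_affine_on T f"
  unfolding piecewise_affine_on_def by blast

lemma sorted_consecutive_intervals_cover:
  fixes ts :: "real list"
  shows "sorted ts \<Longrightarrow> 2 \<le> length ts \<Longrightarrow> hd ts \<le> y \<Longrightarrow> y \<le> last ts \<Longrightarrow>
    \<exists>i. Suc i < length ts \<and> ts!i \<le> y \<and> y \<le> ts!Suc i"
proof (induction ts)
  case Nil
  then show ?case by simp
next
  case (Cons x xs)
  then obtain z zs where xs: "xs = z # zs" by (cases xs) auto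
  show ?case
  proof (cases "y \<le> z \<or> zs = []")
    case True
    then show ?thesis using Cons xs by (intro exI[of _ 0]) auto
  next
    case False
    have "\<exists>i. Suc i < length xs \<and> xs!i \<le> y \<and> y \<le> xs!Suc i"
      by (rule Cons.IH) (use Cons.prems xs False in \<open>auto simp: Suc_le_eq\<close>)
    then obtain i where "Suc i < length xs" "xs!i \<le> y" "y \<le> xs!Suc i" by blast
    then show ?thesis by (intro exI[of _ "Suc i"]) auto
  qed
qed

lemma PL0_piecewise_affine:
  assumes "PL0 f"
  shows "piecewise_affine_on {0..1} f"
proof -
  obtain ts :: "real list" where ts: "sorted_wrt (<) ts" "ts \<noteq> []" "hd ts = 0" "last ts = 1"
    and affine: "\<And>i. Suc i < length ts \<Longrightarrow> \<exists>m k. \<forall>x\<in>{ts!i..ts!Suc i}. f x = m * x + k"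
    using assms unfolding PL0_def by blast
  have "length ts \<noteq> 1"
    using ts by (metis One_nat_def last_ConsL length_0_conv length_Suc_conv list.sel(1) zero_neq_one)
  then have "2 \<le> length ts" using ts(2) by (cases "length ts") auto
  moreover have "sorted ts" using ts(1) by (simp add: sorted_wrt_mono_rel[of _ "(<)"])
  ultimately have cover: "{0..1} \<subseteq> (\<Union>i\<in>{i. Suc i < length ts}. {ts!i..ts!Suc i})"
    using sorted_consecutive_intervals_cover[of ts] ts by fastforce
  have "finite {i. Suc i < length ts}"
    by (rule finite_subset[of _ "{..<length ts}"]) auto
  then show ?thesis
    unfolding piecewise_affine_on_def
    by (intro exI[of _ "(\<lambda>i. {ts!i..ts!Suc i}) ` {i. Suc i < length ts}"] conjI)
      (use cover affine in auto)
qed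

lemma piecewise_affine_no_alternating_fixed_points:
  assumes pa: "piecewise_affine_on S f"
    and p: "\<And>n. p n \<in> S" "\<And>n. f (p n) = p n"
    and z: "\<And>n. p n < z n" "\<And>n. z n < p (Suc n)" "\<And>n. f (z n) \<noteq> z n"
  shows False
proof -
  obtain P where P: "finite P" "S \<subseteq> \<Union>P"
    and pieces: "\<And>I. I \<in> P \<Longrightarrow> convex I \<and> (\<exists>m k. \<forall>x\<in>I. f x = m * x + k)"
    using pa unfolding piecewise_affine_on_def by blast
  define I where "I n = (SOME I. I \<in> P \<and> p n \<in> I)" for n
  have I: "I n \<in> P \<and> p n \<in> I n" for n
    unfolding I_def by (rule someI_ex) (use P(2) p(1) in blast)
  have "\<not> inj I"
  proof
    assume "inj I"
    then have "infinite (range I)" by (rule range_inj_infinite)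
    moreover have "range I \<subseteq> P" using I by blast
    ultimately show False using P(1) finite_subset by blast
  qed
  then obtain n m where "n < m" "I n = I m"
    unfolding inj_def by (metis linorder_neq_iff)
  have "strict_mono p"
    using z(1,2) by (intro strict_monoI_Suc) (rule less_trans)
  then have "p n < p m" "p (Suc n) \<le> p m"
    using \<open>n < m\<close> by (simp_all add: strict_mono_less strict_mono_less_eq Suc_leI)
  have "is_interval (I n)" using pieces I is_interval_convex_1 by blast
  moreover have "p n \<le> z n" "z n \<le> p m"
    using z(1,2)[of n] \<open>p (Suc n) \<le> p m\<close> by linarith+
  ultimately have "z n \<in> I n"
    using I[of n] I[of m] \<open>I n = I m\<close> unfolding is_interval_1 by blast
  obtain a b where ab: "\<forall>x\<in>I n. f x = a * x + b" using pieces I by blast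
  have "a * p n + b = p n" "a * p m + b = p m"
    using ab I[of n] I[of m] p(2) \<open>I n = I m\<close> by metis+
  then have "(a - 1) * (p m - p n) = 0" by (simp add: algebra_simps)
  then have "a = 1" using \<open>p n < p m\<close> by simp
  then have "b = 0" using \<open>a * p n + b = p n\<close> by simp
  then show False using ab \<open>z n \<in> I n\<close> z(3)[of n] \<open>a = 1\<close> by simp
qed

lemma component_supp_endpoints_fixed:
  assumes cont: "continuous_on UNIV f" and comp: "{b<..<d} \<in> components (supp f)" and "b < d"
  shows "f b = b" "f d = d"
proof -
  have "open (supp f)"
    unfolding supp_def by (rule open_Collect_neq[OF cont continuous_on_id])
  have "frontier {b<..<d} = {b, d}"
    using \<open>b < d\<close> by (auto simp: frontier_def interior_open)
  then have "{b, d} \<subseteq> frontier (supp f)" using frontier_of_components_subset[OF comp] by simp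
  then have "b \<notin> supp f" "d \<notin> supp f" using frontier_disjoint_eq \<open>open (supp f)\<close> by blast+
  then show "f b = b" "f d = d" unfolding supp_def by simp_all
qed

lemma orbital_endpoints_fixed:
  assumes "continuous_on UNIV f" "orbital f b d"
  shows "f b = b" "f d = d"
  using assms component_supp_endpoints_fixed unfolding orbital_def by blast+

lemma orbital_subset_supp: "orbital f b d \<Longrightarrow> {b<..<d} \<subseteq> supp f"
  unfolding orbital_def using in_components_subset by blast

lemma word_val_append:
  "word_val f0 f1 (u @ v) = word_val f0 f1 v \<circ> word_val f0 f1 u"
  by (induction u) (simp_all add: comp_assoc)

lemma bij_letter_val:
  "bij f0 \<Longrightarrow> bij f1 \<Longrightarrow> bij (letter_val f0 f1 l)"
  by (simp add: letter_val_def Let_def bij_imp_bij_inv)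

lemma bij_word_val:
  "bij f0 \<Longrightarrow> bij f1 \<Longrightarrow> bij (word_val f0 f1 w)"
  by (induction w) (simp_all add: bij_comp bij_letter_val)

lemma letter_val_flip:
  "bij f0 \<Longrightarrow> bij f1 \<Longrightarrow> letter_val f0 f1 (g, \<not> e) = inv (letter_val f0 f1 (g, e))"
  by (simp add: letter_val_def Let_def inv_inv_eq)

lemma word_val_winv:
  assumes "bij f0" "bij f1"
  shows "word_val f0 f1 (winv w) = inv (word_val f0 f1 w)"
proof (induction w)
  case Nil
  then show ?case by (simp add: winv_def)
next
  case (Cons l w)
  obtain g e where l: "l = (g, e)" by fastforce
  have "word_val f0 f1 (winv (l # w)) = letter_val f0 f1 (g, \<not> e) \<circ> word_val f0 f1 (winv w)"
    by (simp add: winv_def l word_val_append)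
  also have "\<dots> = inv (letter_val f0 f1 (g, e)) \<circ> inv (word_val f0 f1 w)"
    by (simp only: letter_val_flip[OF assms] Cons.IH)
  also have "\<dots> = inv (word_val f0 f1 w \<circ> letter_val f0 f1 (g, e))"
    by (rule o_inv_distrib[symmetric]) (simp_all add: assms bij_word_val bij_letter_val)
  finally show ?case by (simp only: l word_val.simps)
qed

lemma word_val_commute_of_wcomm:
  assumes "bij f0" "bij f1" "word_val f0 f1 (wcomm u v) = id"
  shows "word_val f0 f1 u \<circ> word_val f0 f1 v = word_val f0 f1 v \<circ> word_val f0 f1 u"
proof -
  let ?U = "word_val f0 f1 u" and ?V = "word_val f0 f1 v"
  have "bij ?U" "bij ?V" using assms(1,2) by (simp_all add: bij_word_val)
  have "inv ?V \<circ> inv ?U \<circ> (?V \<circ> ?U) = id"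
    using assms by (simp add: wcomm_def word_val_append word_val_winv comp_assoc)
  then have trivial: "inv ?V (inv ?U (?V (?U x))) = x" for x
    by (metis comp_apply id_apply)
  show ?thesis
  proof
    fix x
    have "?V (?U x) = ?U (?V (inv ?V (inv ?U (?V (?U x)))))"
      using \<open>bij ?U\<close> \<open>bij ?V\<close> by (simp add: bij_is_surj surj_f_inv_f)
    then show "(?U \<circ> ?V) x = (?V \<circ> ?U) x" by (simp add: trivial)
  qed
qed

definition reflect :: "(real \<Rightarrow> real) \<Rightarrow> real \<Rightarrow> real" where
  "reflect f x = - f (- x)"

lemma reflect_comp: "reflect (f \<circ> g) = reflect f \<circ> reflect g"
  by (simp add: fun_eq_iff reflect_def)

lemma reflect_id: "reflect id = id"
  by (simp add: fun_eq_iff reflect_def)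

lemma inv_reflect:
  assumes "bij f"
  shows "inv (reflect f) = reflect (inv f)"
proof (rule inv_unique_comp)
  show "reflect f \<circ> reflect (inv f) = id" "reflect (inv f) \<circ> reflect f = id"
    using assms by (simp_all add: fun_eq_iff reflect_def bij_is_surj bij_is_inj surj_f_inv_f inv_f_f)
qed

lemma strict_mono_reflect: "strict_mono f \<Longrightarrow> strict_mono (reflect f)"
  by (simp add: strict_mono_def reflect_def)

lemma surj_reflect: "surj f \<Longrightarrow> surj (reflect f)"
  unfolding reflect_def surj_def by (metis minus_minus)

lemma continuous_on_reflect:
  assumes "continuous_on UNIV f"
  shows "continuous_on UNIV (reflect f)"
proof -
  have "continuous_on UNIV (\<lambda>x. f (- x))"
    by (rule continuous_on_compose2[OF assms continuous_on_minus[OF continuous_on_id]]) auto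
  then show ?thesis unfolding reflect_def by (rule continuous_on_minus)
qed

lemma letter_val_reflect:
  "bij f0 \<Longrightarrow> bij f1 \<Longrightarrow> letter_val (reflect f0) (reflect f1) l = reflect (letter_val f0 f1 l)"
  by (simp add: letter_val_def Let_def inv_reflect)

lemma word_val_reflect:
  assumes "bij f0" "bij f1"
  shows "word_val (reflect f0) (reflect f1) w = reflect (word_val f0 f1 w)"
  by (induction w) (simp_all only: word_val.simps reflect_id reflect_comp letter_val_reflect[OF assms])

lemma piecewise_affine_on_reflect:
  assumes "piecewise_affine_on S f"
  shows "piecewise_affine_on (uminus ` S) (reflect f)"
proof -
  obtain P where P: "finite P" "S \<subseteq> \<Union>P" "\<And>I. I \<in> P \<Longrightarrow> convex I \<and> (\<exists>m k. \<forall>x\<in>I. f x = m * x + k)"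
    using assms unfolding piecewise_affine_on_def by blast
  have "convex (uminus ` I) \<and> (\<exists>m k. \<forall>x\<in>uminus ` I. reflect f x = m * x + k)" if I: "I \<in> P" for I
  proof -
    obtain m k where "\<forall>x\<in>I. f x = m * x + k" using P(3)[OF I] by blast
    then have "\<forall>x\<in>uminus ` I. reflect f x = m * x + - k" by (auto simp: reflect_def)
    then show ?thesis using P(3)[OF I] convex_negations by blast
  qed
  moreover have "uminus ` S \<subseteq> \<Union>((`) uminus ` P)" using P(2) by blast
  ultimately show ?thesis
    unfolding piecewise_affine_on_def using P(1) by blast
qed

lemma commuting_fixed_point_below:
  fixes G K :: "real \<Rightarrow> real"
  assumes mono: "strict_mono G" and "surj G" and commute: "\<And>x. G (K x) = K (G x)"
    and "G a = a" "a < y" "K y = y" "G y \<noteq> y"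
  shows "\<exists>x\<in>{a<..<y}. K x = x"
proof (cases "G y < y")
  case True
  have "a < G y" using assms(4,5) strict_mono_less[OF mono] by metis
  moreover have "K (G y) = G y" using commute assms(6) by metis
  ultimately show ?thesis using True by auto
next
  case False
  obtain x where x: "G x = y" using \<open>surj G\<close> by (metis surjD)
  have "x < y" using False assms(7) x strict_mono_less[OF mono] by (metis linorder_neqE_linordered_idom)
  moreover have "a < x" using assms(4,5) x strict_mono_less[OF mono] by metis
  moreover have "G (K x) = G x" using commute assms(6) x by metis
  then have "K x = x" using strict_mono_eq[OF mono] by blast
  ultimately show ?thesis by auto
qed

lemma funpow_commute_apply:
  "(\<And>x. G (K x) = K (G x)) \<Longrightarrow> (G ^^ n) (K x) = K ((G ^^ n) x)"
  by (induction n) simp_all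

locale F_homeo_pair =
  fixes f0 f1 :: "real \<Rightarrow> real"
  assumes strict_mono0: "strict_mono f0" and strict_mono1: "strict_mono f1"
    and surj0: "surj f0" and surj1: "surj f1"
    and continuous0: "continuous_on UNIV f0" and continuous1: "continuous_on UNIV f1"
    and relator1: "word_val f0 f1 rel1 = id" and relator2: "word_val f0 f1 rel2 = id"
begin

lemma bij0: "bij f0" and bij1: "bij f1"
  using strict_mono0 strict_mono1 surj0 surj1 strict_mono_imp_inj_on bij_def by blast+

lemma inv_apply [simp]:
  "inv f0 (f0 x) = x" "f0 (inv f0 x) = x" "inv f1 (f1 x) = x" "f1 (inv f1 x) = x"
  using bij0 bij1 by (simp_all add: bij_is_inj bij_is_surj inv_f_f surj_f_inv_f)

lemma strict_mono_inv0: "strict_mono (inv f0)" and strict_mono_inv1: "strict_mono (inv f1)"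
  using strict_mono_inv[OF strict_mono0 surj0] strict_mono_inv[OF strict_mono1 surj1] by simp_all

lemmas less_iff [simp] = strict_mono_less[OF strict_mono0] strict_mono_less[OF strict_mono1]
  strict_mono_less[OF strict_mono_inv0] strict_mono_less[OF strict_mono_inv1]

lemmas eq_iff [simp] = strict_mono_eq[OF strict_mono0] strict_mono_eq[OF strict_mono1]
  strict_mono_eq[OF strict_mono_inv0] strict_mono_eq[OF strict_mono_inv1]

(* In the right-action notation of the paper: g = x0 x1^-1, k1 = x1^x0, k2 = x1^(x0^2). *)
definition g :: "real \<Rightarrow> real" where "g x = inv f1 (f0 x)"
definition k1 :: "real \<Rightarrow> real" where "k1 x = f0 (f1 (inv f0 x))"
definition k2 :: "real \<Rightarrow> real" where "k2 x = f0 (f0 (f1 (inv f0 (inv f0 x))))"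

lemma g_k1_commute: "g (k1 x) = k1 (g x)"
proof -
  have "word_val f0 f1 (X0 @ winv X1) \<circ> word_val f0 f1 (wconj X1 X0)
      = word_val f0 f1 (wconj X1 X0) \<circ> word_val f0 f1 (X0 @ winv X1)"
    using word_val_commute_of_wcomm[OF bij0 bij1] relator1 unfolding rel1_def by blast
  moreover have "word_val f0 f1 (X0 @ winv X1) = g" "word_val f0 f1 (wconj X1 X0) = k1"
    by (simp_all add: fun_eq_iff g_def k1_def wconj_def winv_def X0_def X1_def letter_val_def)
  ultimately show ?thesis by (metis comp_apply)
qed

lemma g_k2_commute: "g (k2 x) = k2 (g x)"
proof -
  have "word_val f0 f1 (X0 @ winv X1) \<circ> word_val f0 f1 (wconj X1 (X0 @ X0))
      = word_val f0 f1 (wconj X1 (X0 @ X0)) \<circ> word_val f0 f1 (X0 @ winv X1)"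
    using word_val_commute_of_wcomm[OF bij0 bij1] relator2 unfolding rel2_def by blast
  moreover have "word_val f0 f1 (X0 @ winv X1) = g" "word_val f0 f1 (wconj X1 (X0 @ X0)) = k2"
    by (simp_all add: fun_eq_iff g_def k2_def wconj_def winv_def X0_def X1_def letter_val_def)
  ultimately show ?thesis by (metis comp_apply)
qed

lemma strict_mono_g: "strict_mono g" and strict_mono_k2: "strict_mono k2"
  by (simp_all add: strict_mono_def g_def k2_def)

lemma surj_g: "surj g" and surj_k2: "surj k2"
  unfolding surj_def g_def k2_def by (metis inv_apply)+

lemma g_less_iff [simp]: "g x < g y \<longleftrightarrow> x < y" and g_eq_iff [simp]: "g x = g y \<longleftrightarrow> x = y"
  by (simp_all add: g_def)

lemma g_fixed_iff: "g y = y \<longleftrightarrow> f0 y = f1 y"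
  by (metis g_def inv_apply(3,4))

lemma k1_fixed_iff: "k1 y = y \<longleftrightarrow> f1 (inv f0 y) = inv f0 y"
  by (metis k1_def inv_apply(1,2))

lemma k2_fixed_iff: "k2 y = y \<longleftrightarrow> f1 (inv f0 (inv f0 y)) = inv f0 (inv f0 y)"
  by (metis k2_def inv_apply(1,2))

lemma F_homeo_pair_reflect: "F_homeo_pair (reflect f0) (reflect f1)"
  by unfold_locales
    (simp_all add: strict_mono_reflect surj_reflect continuous_on_reflect strict_mono0 strict_mono1
      surj0 surj1 continuous0 continuous1 word_val_reflect[OF bij0 bij1] relator1 relator2 reflect_id)

end

locale up_bump_coincidence = F_homeo_pair +
  fixes a c r :: real
  assumes fixed_a: "f0 a = a"
    and up: "\<And>x. x \<in> {a<..<c} \<Longrightarrow> x < f0 x"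
    and r_mem: "r \<in> {a<..<c}" and coincide: "f0 r = f1 r"
    and r_min: "\<And>s. s \<in> {a<..<c} \<Longrightarrow> f0 s = f1 s \<Longrightarrow> r \<le> s"
begin

lemma g_fixed_r: "g r = r"
  using coincide g_fixed_iff by blast

lemma g_not_fixed_below_r: "s \<in> {a<..<r} \<Longrightarrow> g s \<noteq> s"
  using r_min r_mem g_fixed_iff by force

lemma inv_f0_below_r: "inv f0 r < r"
  using up[OF r_mem] by (metis inv_apply(1) less_iff(3))

lemma no_orbital_starting_at_a:
  assumes "f1 a = a" "f1 d = d" "a < d" and moves: "{a<..<d} \<subseteq> supp f1"
  shows False
proof -
  have inv_a: "inv f0 a = a" "inv f1 a = a" using fixed_a assms(1) by (metis inv_apply)+
  have no_k1_fixed: "k1 x \<noteq> x" if "x \<in> {a<..<f0 d}" for x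
  proof -
    have "inv f0 x \<in> {a<..<d}"
      using that inv_a(1) by (metis greaterThanLessThan_iff inv_apply(1) less_iff(3))
    then show ?thesis using moves k1_fixed_iff by (auto simp: supp_def)
  qed
  have "r \<le> f0 d"
  proof (rule ccontr)
    assume "\<not> r \<le> f0 d"
    moreover have "a < f0 d" using fixed_a \<open>a < d\<close> by (metis less_iff(1))
    ultimately have "g (f0 d) \<noteq> f0 d" using g_not_fixed_below_r by simp
    moreover have "g a = a" "k1 (f0 d) = f0 d" using inv_a fixed_a assms(2) by (simp_all add: g_def k1_def)
    ultimately show False
      using commuting_fixed_point_below[of g k1, OF strict_mono_g surj_g g_k1_commute] no_k1_fixed \<open>a < f0 d\<close>
      by blast
  qed
  have "k2 r \<noteq> r"
  proof -
    have "a < inv f0 (inv f0 r)" using r_mem inv_a by (metis greaterThanLessThan_iff less_iff(3))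
    moreover have "inv f0 (inv f0 r) < d"
      using inv_f0_below_r \<open>r \<le> f0 d\<close> by (metis inv_apply(1) less_iff(3) order_less_le_trans)
    ultimately show ?thesis using moves k2_fixed_iff by (auto simp: supp_def)
  qed
  moreover have "k2 a = a" using inv_a fixed_a assms(1) by (simp add: k2_def)
  moreover have "a < r" using r_mem by simp
  ultimately obtain x where "x \<in> {a<..<r}" "g x = x"
    using commuting_fixed_point_below[of k2 g, OF strict_mono_k2 surj_k2 g_k2_commute[symmetric]] g_fixed_r
    by blast
  then show False using g_not_fixed_below_r by blast
qed

lemma g_moves_up_below_r:
  assumes "b \<in> {a<..<c}" "f1 b = b" "b \<le> y" "y < r"
  shows "y < g y" "g y < r"
proof -
  have "f1 y < f0 y"
  proof (rule ccontr)
    assume "\<not> f1 y < f0 y"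
    have "continuous_on {b..y} (\<lambda>x. f1 x - f0 x)"
      by (intro continuous_on_diff continuous_on_subset[OF continuous1] continuous_on_subset[OF continuous0]) auto
    moreover have "f1 b - f0 b \<le> 0" "0 \<le> f1 y - f0 y" using up[OF assms(1)] assms(2) \<open>\<not> f1 y < f0 y\<close> by auto
    ultimately obtain s where s: "b \<le> s" "s \<le> y" "f1 s - f0 s = 0" using IVT'[of "\<lambda>x. f1 x - f0 x"] assms(3) by blast
    have "s \<noteq> b" using s(3) up[OF assms(1)] assms(2) by auto
    then have "s \<in> {a<..<r}" using s(1,2) assms by auto
    moreover have "f0 s = f1 s" using s(3) by simp
    ultimately show False using g_not_fixed_below_r g_fixed_iff by blast
  qed
  then show "y < g y" by (metis g_def inv_apply(3) less_iff(4))
  show "g y < r" using assms(4) coincide by (metis g_def inv_apply(3) less_iff(1,4))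
qed

lemma g_orbit_of_f1_fixed_point:
  assumes b: "b \<in> {a<..<c}" "f1 b = b" "f0 b < r"
  shows "f0 b \<le> (g ^^ n) (f0 b)" "(g ^^ n) (f0 b) < r" "(g ^^ n) (f0 b) < (g ^^ Suc n) (f0 b)"
    and "f1 (inv f0 ((g ^^ n) (f0 b))) = inv f0 ((g ^^ n) (f0 b))"
proof -
  have "b < f0 b" using up[OF b(1)] .
  have bounds: "f0 b \<le> (g ^^ n) (f0 b) \<and> (g ^^ n) (f0 b) < r" for n
  proof (induction n)
    case 0
    then show ?case using b(3) by simp
  next
    case (Suc n)
    then show ?case
      using g_moves_up_below_r[OF b(1,2), of "(g ^^ n) (f0 b)"] \<open>b < f0 b\<close> by auto
  qed
  then show "f0 b \<le> (g ^^ n) (f0 b)" "(g ^^ n) (f0 b) < r" by simp_all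
  show "(g ^^ n) (f0 b) < (g ^^ Suc n) (f0 b)"
    using g_moves_up_below_r(1)[OF b(1,2)] bounds[of n] \<open>b < f0 b\<close> by simp
  have "k1 (f0 b) = f0 b" using b(2) by (simp add: k1_def)
  then have "k1 ((g ^^ n) (f0 b)) = (g ^^ n) (f0 b)"
    using funpow_commute_apply[of g k1 n "f0 b", OF g_k1_commute] by simp
  then show "f1 (inv f0 ((g ^^ n) (f0 b))) = inv f0 ((g ^^ n) (f0 b))" using k1_fixed_iff by blast
qed

lemma bound_of_interior_orbital:
  assumes pa: "piecewise_affine_on {a..c} f1"
    and "a < b" "b < d" "d \<le> c" "f1 b = b" and moves: "{b<..<d} \<subseteq> supp f1"
  shows "r \<le> f0 b"
proof (rule ccontr)
  assume "\<not> r \<le> f0 b"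
  have b: "b \<in> {a<..<c}" "f1 b = b" "f0 b < r" using assms \<open>\<not> r \<le> f0 b\<close> by auto
  define q where "q n = (g ^^ n) (f0 b)" for n
  note q = g_orbit_of_f1_fixed_point[OF b, folded q_def]
  define x where "x = (b + d) / 2"
  have x: "b < x" "x < d" using \<open>b < d\<close> by (simp_all add: x_def)
  then have "f1 x \<noteq> x" using moves by (auto simp: supp_def)
  have "b < inv f0 (q 1)"
    using q(3)[of 0] by (metis inv_apply(1) less_iff(3) funpow_0 q_def One_nat_def)
  have "d \<le> inv f0 (q 1)"
  proof (rule ccontr)
    assume "\<not> d \<le> inv f0 (q 1)"
    then have "inv f0 (q 1) \<in> supp f1" using moves \<open>b < inv f0 (q 1)\<close> by auto
    then show False using q(4)[of 1] by (simp add: supp_def)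
  qed
  define w where "w n = (g ^^ n) (f0 x)" for n
  have between: "q n < w n \<and> w n < q (Suc n)" for n
  proof (induction n)
    case 0
    then show ?case using x \<open>f1 x \<noteq> x\<close> \<open>d \<le> inv f0 (q 1)\<close> by (simp add: q_def w_def) (metis inv_apply(2) less_iff(1) order_less_le_trans)
  next
    case (Suc n)
    then show ?case by (simp add: q_def w_def)
  qed
  have "k1 (f0 x) \<noteq> f0 x" using \<open>f1 x \<noteq> x\<close> by (simp add: k1_def)
  then have "k1 (w n) \<noteq> w n" for n
    using funpow_commute_apply[of g k1 n "f0 x", OF g_k1_commute] inj_fn[OF strict_mono_imp_inj_on[OF strict_mono_g], of n]
    by (metis injD w_def)
  moreover have "inv f0 (q n) \<in> {a..c}" for n
    using q(1,2)[of n] inv_f0_below_r r_mem \<open>a < b\<close> by (metis atLeastAtMost_iff greaterThanLessThan_iff inv_apply(1) less_iff(3) less_le_trans order_less_imp_le not_less)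
  ultimately show False
    using piecewise_affine_no_alternating_fixed_points[OF pa, of "\<lambda>n. inv f0 (q n)" "\<lambda>n. inv f0 (w n)"]
      q(4) between k1_fixed_iff by (simp add: q_def)
qed

end

context F_homeo_pair
begin

lemma first_coincidence_le_f0_orbital_start:
  assumes pa: "piecewise_affine_on {a..c} f1" and "f0 a = a" "\<forall>x\<in>{a<..<c}. x < f0 x"
    and "r \<in> {a<..<c}" "f0 r = f1 r" "\<forall>s\<in>{a<..<c}. f0 s = f1 s \<longrightarrow> r \<le> s"
    and "f1 b = b" "f1 d = d" "{b<..<d} \<subseteq> supp f1" "a \<le> b" "b < d" "d \<le> c"
  shows "r \<le> f0 b"
proof -
  interpret up_bump_coincidence f0 f1 a c r
    by unfold_locales (use assms in auto)
  show ?thesis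
  proof (cases "a < b")
    case True
    then show ?thesis using bound_of_interior_orbital assms by blast
  next
    case False
    then show ?thesis using no_orbital_starting_at_a[of d] assms by force
  qed
qed

lemma f0_orbital_end_le_last_coincidence:
  assumes pa: "piecewise_affine_on {a..c} f1" and "f0 c = c" and down: "\<forall>x\<in>{a<..<c}. f0 x < x"
    and "r \<in> {a<..<c}" "f0 r = f1 r" and r_max: "\<forall>s\<in>{a<..<c}. f0 s = f1 s \<longrightarrow> s \<le> r"
    and "f1 b = b" "f1 d = d" and moves: "{b<..<d} \<subseteq> supp f1" and "a \<le> b" "b < d" "d \<le> c"
  shows "f0 d \<le> r"
proof -
  interpret reflected: F_homeo_pair "reflect f0" "reflect f1"
    by (rule F_homeo_pair_reflect)
  have "- r \<le> reflect f0 (- d)"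
  proof (rule reflected.first_coincidence_le_f0_orbital_start)
    show "piecewise_affine_on {-c..-a} (reflect f1)"
      using piecewise_affine_on_reflect[OF pa] by simp
    show "\<forall>x\<in>{-c<..<-a}. x < reflect f0 x"
    proof
      fix x :: real
      assume "x \<in> {-c<..<-a}"
      then have "- x \<in> {a<..<c}" by auto
      then show "x < reflect f0 x" using down by (force simp: reflect_def)
    qed
    show "\<forall>s\<in>{-c<..<-a}. reflect f0 s = reflect f1 s \<longrightarrow> - r \<le> s"
    proof (intro ballI impI)
      fix s :: real
      assume "s \<in> {-c<..<-a}" "reflect f0 s = reflect f1 s"
      then have "- s \<in> {a<..<c}" "f0 (- s) = f1 (- s)" by (auto simp: reflect_def)
      then show "- r \<le> s" using r_max by force
    qed
    show "{- d<..<- b} \<subseteq> supp (reflect f1)"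
    proof
      fix x :: real
      assume "x \<in> {- d<..<- b}"
      then have "- x \<in> supp f1" using moves by auto
      then show "x \<in> supp (reflect f1)" by (auto simp: supp_def reflect_def)
    qed
  qed (use assms in \<open>auto simp: reflect_def\<close>)
  then show ?thesis by (simp add: reflect_def)
qed

end

lemma F_homeo_pair_of_standard_F_copy:
  assumes "PL0 f0" "PL0 f1" "standard_F_copy f0 f1"
  shows "F_homeo_pair f0 f1"
proof
  show "word_val f0 f1 rel1 = id" "word_val f0 f1 rel2 = id"
    using assms(3) F_rel1 F_rel2 unfolding standard_F_copy_def by auto
qed (use assms PL0_strict_mono PL0_surj PL0_continuous in auto)

theorem lemma2p10:
  fixes f0 f1 :: "real \<Rightarrow> real" and a c :: real
  assumes "PL0 f0" and "PL0 f1"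
    and "standard_F_copy f0 f1"
    and "orbital f0 a c"
  shows "(\<forall>r b1 d1. up_bump f0 a c
            \<and> r \<in> {a<..<c} \<and> f0 r = f1 r
            \<and> (\<forall>s\<in>{a<..<c}. f0 s = f1 s \<longrightarrow> r \<le> s)
            \<and> orbital f1 b1 d1 \<and> {b1<..<d1} \<subseteq> {a<..<c}
            \<and> (\<forall>b d. orbital f1 b d \<and> {b<..<d} \<subseteq> {a<..<c} \<longrightarrow> b1 \<le> b)
            \<longrightarrow> f0 b1 \<ge> r)
       \<and> (\<forall>r bn dn. down_bump f0 a c
            \<and> r \<in> {a<..<c} \<and> f0 r = f1 r
            \<and> (\<forall>s\<in>{a<..<c}. f0 s = f1 s \<longrightarrow> s \<le> r)
            \<and> orbital f1 bn dn \<and> {bn<..<dn} \<subseteq> {a<..<c}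
            \<and> (\<forall>b d. orbital f1 b d \<and> {b<..<d} \<subseteq> {a<..<c} \<longrightarrow> d \<le> dn)
            \<longrightarrow> f0 dn \<le> r)"
proof -
  interpret F_homeo_pair f0 f1
    using F_homeo_pair_of_standard_F_copy assms(1-3) .
  have "a < c" using assms(4) unfolding orbital_def by blast
  have ends: "f0 a = a" "f0 c = c" using orbital_endpoints_fixed[OF continuous0 assms(4)] .
  have "{a<..<c} \<subseteq> {0<..<1}" using orbital_subset_supp[OF assms(4)] PL0_supp[OF assms(1)] by blast
  then have "0 \<le> a" "c \<le> 1"
    using \<open>a < c\<close> greaterThanLessThan_subseteq_greaterThanLessThan by blast+
  then have "{a..c} \<subseteq> {0..1}" by auto
  then have pa: "piecewise_affine_on {a..c} f1"
    using piecewise_affine_on_subset[OF PL0_piecewise_affine[OF assms(2)]] by blast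
  have inner: "f1 b = b \<and> f1 d = d \<and> {b<..<d} \<subseteq> supp f1 \<and> a \<le> b \<and> b < d \<and> d \<le> c"
    if "orbital f1 b d" "{b<..<d} \<subseteq> {a<..<c}" for b d
  proof -
    have "b < d" using that(1) unfolding orbital_def by blast
    then show ?thesis
      using that orbital_endpoints_fixed[OF continuous1] orbital_subset_supp
        greaterThanLessThan_subseteq_greaterThanLessThan by blast
  qed
  show ?thesis
    using first_coincidence_le_f0_orbital_start[OF pa ends(1)]
      f0_orbital_end_le_last_coincidence[OF pa ends(2)] inner
    unfolding up_bump_def down_bump_def by blast
qed

end
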